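(* Let $\psi=\Gamma'/\Gamma$ be the digamma function. For all $z>0$, $\frac1{2z}<\psi\big(z+\tfrac12\big)-\psi(z)<\ln\big(1+\tfrac1{2z}\big)+\frac1z-\frac2{2z+1}$. *)

theory Defs
  imports "HOL-Analysis.Analysis"
begin

end

theory Submission
  imports Defs "HOL-Real_Asymp.Real_Asymp"
begin

text \<open>
  Write \<open>\<psi>(z + 1/2) - \<psi>(z) = \<Sum>\<^sub>n (1/(z+n) - 1/(z+n+1/2))\<close> and compare this series
  termwise with two telescoping series: \<open>\<Sum>\<^sub>n (1/(2(z+n)) - 1/(2(z+n+1)))\<close> for the lower
  bound, and, after splitting off the term \<open>n = 0\<close>, \<open>\<Sum>\<^sub>n (g(z+n) - g(z+n+1))\<close> with
  \<open>g(w) = ln(1 + 1/(2w))\<close> for the upper bound.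
\<close>

lemma Digamma_diff_sums:
  fixes x y :: "'a :: {real_normed_field,banach}"
  assumes "x \<noteq> 0" "y \<noteq> 0"
  shows "(\<lambda>n. inverse (x + of_nat n) - inverse (y + of_nat n)) sums (Digamma y - Digamma x)"
proof -
  have "(\<lambda>n. inverse (of_nat (Suc n)) - inverse (y + of_nat n)) sums (Digamma y + euler_mascheroni)"
       "(\<lambda>n. inverse (of_nat (Suc n)) - inverse (x + of_nat n)) sums (Digamma x + euler_mascheroni)"
    using summable_Digamma[OF assms(2)] summable_Digamma[OF assms(1)]
    by (simp_all add: Digamma_def summable_sums)
  from sums_diff[OF this] show ?thesis
    by simp
qed

lemma sums_less:
  fixes f g :: "nat \<Rightarrow> real"
  assumes "\<And>n. f n < g n" "f sums s" "g sums t"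
  shows "s < t"
proof -
  have "(\<lambda>n. g n - f n) sums (t - s)"
    using sums_diff[OF assms(3,2)] .
  moreover from this have "0 < (\<Sum>n. g n - f n)"
    using assms(1) by (intro suminf_pos) (auto dest: sums_summable)
  ultimately show ?thesis
    by (simp add: sums_iff)
qed

lemma half_shift_lower_bound:
  fixes w :: real
  assumes "w > 0"
  shows "1 / (2 * w) - 1 / (2 * (w + 1)) < 1 / w - 1 / (w + 1/2)"
proof -
  have "1 / (2 * w) - 1 / (2 * (w + 1)) = (1/2) / (w * (w + 1))"
    using assms by (simp add: field_simps)
  also have "\<dots> < (1/2) / (w * (w + 1/2))"
    using assms by (intro divide_strict_left_mono mult_strict_left_mono) auto
  also have "\<dots> = 1 / w - 1 / (w + 1/2)"
    using assms by (simp add: field_simps)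
  finally show ?thesis .
qed

lemma half_shift_upper_bound:
  fixes w :: real
  assumes "w > 0"
  shows "1 / (w + 1) - 1 / (w + 3/2) < ln (1 + 1 / (2 * w)) - ln (1 + 1 / (2 * (w + 1)))"
proof -
  define p q where "p = 1 + 1 / (2 * w)" and "q = 1 + 1 / (2 * (w + 1))"
  have "p > 0" "q > 0"
    using assms by (simp_all add: p_def q_def add_pos_pos)
  have "1 / (w + 1) - 1 / (w + 3/2) = (1/2) / ((w + 1) * (w + 3/2))"
    using assms by (simp add: field_simps)
  also have "\<dots> < (1/2) / ((w + 1) * (w + 1/2))"
    using assms by (intro divide_strict_left_mono mult_strict_left_mono) auto
  also have "\<dots> = (p - q) / p"
    using assms by (simp add: p_def q_def divide_simps) (simp add: algebra_simps)
  also have "\<dots> \<le> ln p - ln q"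
    using ln_diff_le[OF \<open>q > 0\<close> \<open>p > 0\<close>] \<open>p > 0\<close> by (simp add: diff_divide_distrib)
  finally show ?thesis
    by (simp add: p_def q_def)
qed

theorem lemma3:
  fixes z :: real
  assumes "z > 0"
  shows "1 / (2 * z) < Digamma (z + 1/2) - Digamma z \<and>
         Digamma (z + 1/2) - Digamma z < ln (1 + 1 / (2 * z)) + 1 / z - 2 / (2 * z + 1)"
proof -
  define D where "D = Digamma (z + 1/2) - Digamma z"
  define a where "a n = 1 / (z + real n) - 1 / (z + 1/2 + real n)" for n
  define h where "h n = 1 / (2 * (z + real n))" for n
  define g where "g n = ln (1 + 1 / (2 * (z + real n)))" for n
  have a_sums: "a sums D"
    unfolding a_def[abs_def] D_def
    using Digamma_diff_sums[of z "z + 1/2"] assms by (simp add: inverse_eq_divide)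
  have "h \<longlonglongrightarrow> 0" "g \<longlonglongrightarrow> 0"
    using assms unfolding h_def g_def by real_asymp+
  then have h_sums: "(\<lambda>n. h n - h (Suc n)) sums h 0"
        and g_sums: "(\<lambda>n. g n - g (Suc n)) sums g 0"
    using telescope_sums' by fastforce+
  have "h n - h (Suc n) < a n" for n
    using half_shift_lower_bound[of "z + real n"] assms by (simp add: h_def a_def add_ac)
  from sums_less[OF this h_sums a_sums] have lower: "h 0 < D" .
  have "a (Suc n) < g n - g (Suc n)" for n
    using half_shift_upper_bound[of "z + real n"] assms by (simp add: g_def a_def add_ac)
  moreover have "(\<lambda>n. a (Suc n)) sums (D - a 0)"
    using a_sums by (simp add: sums_Suc_iff)
  ultimately have upper: "D - a 0 < g 0"
    using g_sums by (rule sums_less)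
  have "a 0 = 1 / z - 2 / (2 * z + 1)"
    using assms by (simp add: a_def field_simps)
  with lower upper show ?thesis
    by (simp add: D_def h_def g_def)
qed

end
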